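(* Let $H=(\mathcal{V},\mathcal{I})$ be a proper interval hypergraph. Then $H$ is exactly hittable.
   Context: An interval hypergraph has vertex set $[n]=\{1,\dots,n\}$ and hyperedges that are nonempty sets of consecutive integers. It is proper if no interval is properly contained in another. It is exactly hittable if there is $S\subseteq\mathcal{V}$ with $|S\cap I|=1$ for every $I\in\mathcal{I}$. *)

theory Defs
  imports Main
begin

definition is_interval :: "nat set \<Rightarrow> bool" where
  "is_interval I \<longleftrightarrow> (\<exists>a b. a \<le> b \<and> I = {a..b})"

definition interval_hypergraph :: "nat \<Rightarrow> nat set set \<Rightarrow> bool" where
  "interval_hypergraph n E \<longleftrightarrow> (\<forall>I\<in>E. is_interval I \<and> I \<subseteq> {1..n})"

definition proper_hypergraph :: "nat set set \<Rightarrow> bool" where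
  "proper_hypergraph E \<longleftrightarrow> (\<forall>I\<in>E. \<forall>J\<in>E. \<not> I \<subset> J)"

definition exactly_hittable :: "nat \<Rightarrow> nat set set \<Rightarrow> bool" where
  "exactly_hittable n E \<longleftrightarrow> (\<exists>S. S \<subseteq> {1..n} \<and> (\<forall>I\<in>E. card (S \<inter> I) = 1))"

end

theory Submission
  imports Defs
begin

text \<open>In a proper family of intervals the order of the right endpoints agrees with the order of
  the left endpoints. Sweep the intervals from the one with the largest right endpoint J downwards:
  by induction the remaining intervals are hit exactly once by a set S of right endpoints. Two points
  of S inside J would both lie in the interval ending at the larger one, since that interval starts
  before J; so J meets S at most once, and if it misses S we add its right endpoint, which lies in
  no other interval.\<close>

lemma is_interval_eq_Min_Max:
  assumes "is_interval I"
  shows "I = {Min I..Max I}"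
proof -
  from assms obtain a b where ab: "a \<le> b" "I = {a..b}" unfolding is_interval_def by blast
  moreover have "Min {a..b} = a" using ab(1) by (intro Min_eqI) auto
  moreover have "Max {a..b} = b" using ab(1) by (intro Max_eqI) auto
  ultimately show ?thesis by simp
qed

lemma is_interval_iff_Min_Max:
  assumes "is_interval I"
  shows "x \<in> I \<longleftrightarrow> Min I \<le> x \<and> x \<le> Max I"
  by (subst is_interval_eq_Min_Max[OF assms]) simp

lemma is_interval_Max_in:
  assumes "is_interval I"
  shows "Max I \<in> I"
  using assms by (auto simp: is_interval_def)

lemma interval_Min_less_if_Max_less:
  assumes "is_interval I" "is_interval J" "\<not> I \<subset> J" "Max I < Max J"
  shows "Min I < Min J"
proof (rule ccontr)
  assume "\<not> Min I < Min J"
  then have "I \<subseteq> J" using assms(4)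
    by (auto simp: is_interval_iff_Min_Max[OF assms(1)] is_interval_iff_Min_Max[OF assms(2)])
  moreover have "Max J \<notin> I" using assms(4) by (auto simp: is_interval_iff_Min_Max[OF assms(1)])
  ultimately show False using assms(3) is_interval_Max_in[OF assms(2)] by blast
qed

lemma proper_interval_family_inj_on_Max:
  assumes "\<forall>I\<in>E. is_interval I" "proper_hypergraph E"
  shows "inj_on Max E"
proof (rule inj_onI)
  fix I J assume IJ: "I \<in> E" "J \<in> E" "Max I = Max J"
  then have "I \<subseteq> J \<or> J \<subseteq> I" using assms(1)
    by (auto simp: is_interval_iff_Min_Max)
  then show "I = J" using IJ assms(2) unfolding proper_hypergraph_def by blast
qed

lemma right_endpoints_meet_last_interval_at_most_once:
  assumes intervals: "\<forall>I\<in>E. is_interval I" and proper: "proper_hypergraph E"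
    and J: "J \<in> E" "\<forall>I\<in>E - {J}. Max I < Max J"
    and S: "S \<subseteq> Max ` (E - {J})" "\<forall>I\<in>E - {J}. card (S \<inter> I) = 1"
    and st: "s \<in> S \<inter> J" "t \<in> S \<inter> J"
  shows "s = t"
proof (rule ccontr)
  have no_pair: False if less: "u < v" and uv: "u \<in> S \<inter> J" "v \<in> S \<inter> J" for u v
  proof -
    obtain I where I: "I \<in> E - {J}" "v = Max I" using S(1) uv(2) by blast
    have I_interval: "is_interval I" and J_interval: "is_interval J" using I(1) J(1) intervals by auto
    have "\<not> I \<subset> J" using I(1) J(1) proper unfolding proper_hypergraph_def by blast
    then have "Min I < Min J"
      using interval_Min_less_if_Max_less[OF I_interval J_interval] I(1) J(2) by blast
    moreover have "Min J \<le> u" using uv(1) is_interval_iff_Min_Max[OF J_interval] by blast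
    ultimately have "u \<in> I" using less I(2) is_interval_iff_Min_Max[OF I_interval] by simp
    moreover have "v \<in> I" using I(2) is_interval_Max_in[OF I_interval] by simp
    ultimately have uv_in_I: "{u, v} \<subseteq> S \<inter> I" using uv by blast
    have card_I: "card (S \<inter> I) = 1" using S(2) I(1) by blast
    then have "finite (S \<inter> I)" by (intro card_ge_0_finite) simp
    then have "card {u, v} \<le> card (S \<inter> I)" using uv_in_I by (rule card_mono)
    then show False using card_I less by simp
  qed
  assume "s \<noteq> t"
  then consider "s < t" | "t < s" by linarith
  then show False using no_pair st by cases blast+
qed

lemma proper_interval_family_exact_hitting_set:
  assumes "finite E" "\<forall>I\<in>E. is_interval I" "proper_hypergraph E"
  shows "\<exists>S \<subseteq> Max ` E. \<forall>I\<in>E. card (S \<inter> I) = 1"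
  using assms(1)
proof (induction rule: finite_remove_induct)
  case empty
  show ?case by simp
next
  case (remove A)
  have intervals: "\<forall>I\<in>A. is_interval I" using remove.hyps(3) assms(2) by blast
  have proper: "proper_hypergraph A"
    using remove.hyps(3) assms(3) unfolding proper_hypergraph_def by blast
  have "Max (Max ` A) \<in> Max ` A" using remove.hyps(1,2) by (intro Max_in) auto
  then obtain J where J: "J \<in> A" "Max J = Max (Max ` A)" by (elim imageE) simp
  have Max_less: "\<forall>I\<in>A - {J}. Max I < Max J"
  proof
    fix I assume I: "I \<in> A - {J}"
    then have "Max I \<le> Max J" using J(2) remove.hyps(1) by simp
    moreover have "Max I \<noteq> Max J"
      using I J(1) proper_interval_family_inj_on_Max[OF intervals proper] by (auto dest: inj_onD)
    ultimately show "Max I < Max J" by simp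
  qed
  obtain S where S: "S \<subseteq> Max ` (A - {J})" "\<forall>I\<in>A - {J}. card (S \<inter> I) = 1"
    using remove.IH[OF J(1)] by blast
  note at_most_once =
    right_endpoints_meet_last_interval_at_most_once[OF intervals proper J(1) Max_less S]
  show ?case
  proof (cases "S \<inter> J = {}")
    case True
    have "card (insert (Max J) S \<inter> I) = 1" if "I \<in> A" for I
    proof (cases "I = J")
      case True
      then have "insert (Max J) S \<inter> I = {Max J}"
        using \<open>S \<inter> J = {}\<close> intervals J(1) is_interval_Max_in by blast
      then show ?thesis by simp
    next
      case False
      then have "Max I < Max J" using Max_less that by blast
      then have "Max J \<notin> I" using that intervals is_interval_iff_Min_Max[of I "Max J"] by simp
      then show ?thesis using S(2) that False by simp
    qed
    moreover have "insert (Max J) S \<subseteq> Max ` A" using S(1) J(1) by blast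
    ultimately show ?thesis by blast
  next
    case False
    then obtain s where "s \<in> S \<inter> J" by blast
    then have "S \<inter> J = {s}" using at_most_once by blast
    then have "card (S \<inter> I) = 1" if "I \<in> A" for I
      using S(2) that by (cases "I = J") auto
    moreover have "S \<subseteq> Max ` A" using S(1) by blast
    ultimately show ?thesis by blast
  qed
qed

theorem lemma9:
  fixes n :: nat and E :: "nat set set"
  assumes "interval_hypergraph n E"
    and "proper_hypergraph E"
  shows "exactly_hittable n E"
proof -
  have intervals: "\<forall>I\<in>E. is_interval I" and within: "\<forall>I\<in>E. I \<subseteq> {1..n}"
    using assms(1) unfolding interval_hypergraph_def by auto
  then have "finite E" by (intro finite_subset[of E "Pow {1..n}"]) auto
  then obtain S where S: "S \<subseteq> Max ` E" "\<forall>I\<in>E. card (S \<inter> I) = 1"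
    using proper_interval_family_exact_hitting_set[OF _ intervals assms(2)] by blast
  have "Max I \<in> {1..n}" if "I \<in> E" for I
    using that intervals within is_interval_Max_in by blast
  then have "S \<subseteq> {1..n}" using S(1) by blast
  with S(2) show ?thesis unfolding exactly_hittable_def by blast
qed

end
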